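(* Let $F:\mathbb{R}^{n_e}\times\mathbb{R}^{n_x}\to\mathbb{R}^{n_e}$ and $G:\mathbb{R}^{n_e}\times\mathbb{R}^{n_x}\to\mathbb{R}^{n_x}$ be $C^2$, and consider the system $$\dot e = F(e,x),\qquad \dot x = G(e,x),$$ whose solution through $(e_0,x_0)$ at $t=0$ is denoted $(E(e_0,x_0,t),X(e_0,x_0,t))$. Assume property TULES-NL holds: the system is forward complete and there exist real numbers $r>0$, $k>0$, $\lambda>0$ such that $$|E(e_0,x_0,t)|\le k|e_0|\exp(-\lambda t)\quad\text{for all }(e_0,x_0,t)\in B_e(r)\times\mathbb{R}^{n_x}\times\mathbb{R}_{\ge 0}.$$ Assume moreover that there exist positive real numbers $\rho,\mu,c$ such that the following bounds hold. - For all $x\in\mathbb{R}^{n_x}$: $\left|\frac{\partial F}{\partial e}(0,x)\right|\le\mu$ and $\left|\frac{\partial G}{\partial x}(0,x)\right|\le\rho$. - For all $(e,x)\in B_e(kr)\times\mathbb{R}^{n_x}$: $\left|\frac{\partial^2 F}{\partial e\partial e}(e,x)\right|\le c$, $\left|\frac{\partial^2 F}{\partial x\partial e}(e,x)\right|\le c$ and $\left|\frac{\partial G}{\partial e}(e,x)\right|\le c$. Then property UES-TL holds. That is: - the system $\dot{\tilde x}=\tilde G(\tilde x):=G(0,\tilde x)$ is forward complete; - there exist real numbers $\tilde k>0$ and $\tilde\lambda>0$ such that every solution $(\tilde E(\tilde e_0,\tilde x_0,t),\tilde X(\tilde x_0,t))$ of the transversally linear system $$\dot{\tilde e}=\frac{\partial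 F}{\partial e}(0,\tilde x)\,\tilde e,\qquad \dot{\tilde x}=G(0,\tilde x)$$ satisfies $|\tilde E(\tilde e_0,\tilde x_0,t)|\le\tilde k\exp(-\tilde\lambda t)|\tilde e_0|$ for all $(\tilde e_0,\tilde x_0,t)\in\mathbb{R}^{n_e}\times\mathbb{R}^{n_x}\times\mathbb{R}_{\ge0}$.
   Context: $B_e(a)$ denotes the open ball of radius $a$ centered at the origin of $\mathbb{R}^{n_e}$. The notation $|\cdot|$ denotes the Euclidean norm for vectors and the corresponding operator norm for matrices and higher derivatives. *)

theory Defs
  imports "HOL-Analysis.Analysis"
begin

definition solves_fwd :: "(real \<Rightarrow> 'a::real_normed_vector) \<Rightarrow> ('a \<Rightarrow> 'a) \<Rightarrow> bool" where
  "solves_fwd \<phi> f \<longleftrightarrow> (\<forall>t\<ge>0. (\<phi> has_vector_derivative f (\<phi> t)) (at t within {0..}))"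

definition forward_complete :: "('a::real_normed_vector \<Rightarrow> 'a) \<Rightarrow> bool" where
  "forward_complete f \<longleftrightarrow> (\<forall>z0. \<exists>\<phi>. \<phi> 0 = z0 \<and> solves_fwd \<phi> f)"

end

theory Submission
  imports Defs
begin

text \<open>
  Taking \<open>e\<^sub>0 = 0\<close> in TULES-NL shows that solutions starting on \<open>{e = 0}\<close> stay there;
  hence \<open>F (0, x) = 0\<close> and the reduced system \<open>\<dot>x = G (0, x)\<close> is forward complete.
  For the exponential estimate, compare a solution \<open>(\<tilde>e, \<tilde>x)\<close> of the transversally
  linear system with the solution \<open>(E, X)\<close> of the full system through \<open>(\<epsilon> \<tilde>e\<^sub>0, \<tilde>x\<^sub>0)\<close>.
  By TULES-NL, \<open>|E| = O(\<epsilon>)\<close> uniformly in time; a Gronwall estimate then gives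
  \<open>|X - \<tilde>x| = O(\<epsilon>)\<close>, and a second one, using the second-order Taylor bound on \<open>F\<close>,
  gives \<open>|E - \<epsilon> \<tilde>e| = O(\<epsilon>\<^sup>2)\<close> on every compact time interval. So
  \<open>|\<tilde>e(t)| \<le> k exp (-\<lambda> t) |\<tilde>e\<^sub>0| + O(\<epsilon>)\<close>, and \<open>\<epsilon> \<rightarrow> 0\<close> yields UES-TL with the same \<open>k\<close> and \<open>\<lambda>\<close>.
\<close>

lemma norm_diff_le_of_segment_derivative_bound:
  fixes H :: "'a::real_normed_vector \<Rightarrow> 'b::real_normed_vector"
  assumes der: "\<And>z. (H has_derivative H' z) (at z)"
    and bnd: "\<And>s. 0 \<le> s \<Longrightarrow> s \<le> 1 \<Longrightarrow> norm (H' (p + s *\<^sub>R (q - p)) (q - p)) \<le> B"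
  shows "norm (H q - H p) \<le> B"
proof -
  define \<gamma> where "\<gamma> s = p + s *\<^sub>R (q - p)" for s
  have d\<gamma>: "((H \<circ> \<gamma>) has_vector_derivative H' (\<gamma> s) (q - p)) (at s)" for s
    unfolding \<gamma>_def
    by (rule vector_derivative_diff_chain_within[OF _ has_derivative_subset[OF der]])
       (auto intro!: derivative_eq_intros)
  have "continuous_on {0..1} (H \<circ> \<gamma>)"
    using d\<gamma> by (meson continuous_at_imp_continuous_on has_vector_derivative_continuous)
  then have "norm ((H \<circ> \<gamma>) 1 - (H \<circ> \<gamma>) 0) \<le> B * 1 - B * 0"
    by (rule differentiable_bound_general[OF zero_less_one _ _ d\<gamma>, where \<phi>' = "\<lambda>_. B"])
       (auto intro!: continuous_intros derivative_eq_intros bnd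
         simp: \<gamma>_def has_vector_derivative_def)
  then show ?thesis by (simp add: \<gamma>_def)
qed

lemma norm_le_exp_of_affine_derivative_bound:
  fixes u :: "real \<Rightarrow> 'a::real_inner"
  assumes der: "\<And>s. 0 \<le> s \<Longrightarrow> s \<le> T \<Longrightarrow> (u has_vector_derivative u' s) (at s within {0..})"
    and bnd: "\<And>s. 0 \<le> s \<Longrightarrow> s \<le> T \<Longrightarrow> norm (u' s) \<le> L * norm (u s) + B"
    and L: "0 \<le> L" and B: "0 \<le> B" and t: "0 \<le> t" "t \<le> T"
  shows "norm (u t) \<le> (norm (u 0) + B) * exp ((L + 1/2) * t)"
proof -
  define M where "M = 2 * L + 1"
  \<comment> \<open>Work with \<open>|u|\<^sup>2\<close>, which unlike \<open>|u|\<close> is differentiable where \<open>u\<close> vanishes.\<close>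
  define g where "g s = exp (- M * s) * (u s \<bullet> u s + B\<^sup>2)" for s
  have "continuous_on {0..t} u"
  proof (rule continuous_on_vector_derivative)
    fix s assume s: "s \<in> {0..t}"
    show "(u has_vector_derivative u' s) (at s within {0..t})"
      by (rule has_vector_derivative_within_subset[OF der]) (use s t in auto)
  qed
  then have cont: "continuous_on {0..t} g"
    unfolding g_def by (intro continuous_intros)
  have "g t \<le> g 0"
  proof (rule DERIV_nonpos_imp_decreasing_open[OF t(1) _ cont])
    fix s assume s: "0 < s" "s < t"
    have "(u has_vector_derivative u' s) (at s within {0<..})"
      by (rule has_vector_derivative_within_subset[OF der]) (use s t in auto)
    then have "(u has_vector_derivative u' s) (at s)"
      using s has_vector_derivative_within_open[of s "{0<..}" u "u' s"] by auto
    then have dg: "(g has_real_derivative exp (- M * s) * (2 * (u s \<bullet> u' s) - M * (u s \<bullet> u s + B\<^sup>2))) (at s)"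
      unfolding g_def has_field_derivative_def has_vector_derivative_def
      by (auto intro!: derivative_eq_intros simp: algebra_simps inner_commute)
    have "2 * (u s \<bullet> u' s) \<le> 2 * (norm (u s) * norm (u' s))"
      using norm_cauchy_schwarz[of "u s" "u' s"] by simp
    also have "\<dots> \<le> 2 * (norm (u s) * (L * norm (u s) + B))"
      using bnd[of s] s t by (intro mult_left_mono) auto
    also have "\<dots> = 2 * L * (norm (u s))\<^sup>2 + 2 * norm (u s) * B"
      by (simp add: algebra_simps power2_eq_square)
    also have "\<dots> \<le> 2 * L * (norm (u s))\<^sup>2 + ((norm (u s))\<^sup>2 + B\<^sup>2)"
      using sum_squares_bound[of "norm (u s)" B] by simp
    also have "\<dots> \<le> M * (u s \<bullet> u s + B\<^sup>2)"
      using L by (simp add: M_def power2_norm_eq_inner algebra_simps)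
    finally show "\<exists>y. (g has_real_derivative y) (at s) \<and> y \<le> 0"
      using dg by (intro exI conjI) (auto intro: mult_nonneg_nonpos)
  qed
  then have "(norm (u t))\<^sup>2 + B\<^sup>2 \<le> ((norm (u 0))\<^sup>2 + B\<^sup>2) * exp (M * t)"
    by (simp add: g_def power2_norm_eq_inner exp_minus field_simps)
  then have "(norm (u t))\<^sup>2 \<le> ((norm (u 0))\<^sup>2 + B\<^sup>2) * exp (M * t)"
    using zero_le_power2[of B] by linarith
  also have "\<dots> \<le> (norm (u 0) + B)\<^sup>2 * exp (M * t)"
    using B by (intro mult_right_mono) (auto simp: power2_sum)
  also have "exp (M * t) = (exp ((L + 1/2) * t))\<^sup>2"
    unfolding M_def exp_double[symmetric] by (simp add: algebra_simps)
  finally have "(norm (u t))\<^sup>2 \<le> ((norm (u 0) + B) * exp ((L + 1/2) * t))\<^sup>2"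
    by (simp only: power_mult_distrib)
  then show ?thesis
    by (rule power2_le_imp_le) (use B in simp)
qed

lemma solves_fwd_fst:
  assumes "solves_fwd \<phi> f" "0 \<le> s"
  shows "((\<lambda>t. fst (\<phi> t)) has_vector_derivative fst (f (\<phi> s))) (at s within {0..})"
proof -
  have "(\<phi> has_derivative (\<lambda>h. h *\<^sub>R f (\<phi> s))) (at s within {0..})"
    using assms by (simp add: solves_fwd_def has_vector_derivative_def)
  from has_derivative_fst[OF this] show ?thesis
    by (simp add: has_vector_derivative_def)
qed

lemma solves_fwd_snd:
  assumes "solves_fwd \<phi> f" "0 \<le> s"
  shows "((\<lambda>t. snd (\<phi> t)) has_vector_derivative snd (f (\<phi> s))) (at s within {0..})"
proof -
  have "(\<phi> has_derivative (\<lambda>h. h *\<^sub>R f (\<phi> s))) (at s within {0..})"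
    using assms by (simp add: solves_fwd_def has_vector_derivative_def)
  from has_derivative_snd[OF this] show ?thesis
    by (simp add: has_vector_derivative_def)
qed

lemma le_of_le_add_eps_multiple:
  fixes x y C d :: real
  assumes d: "0 < d" and le: "\<And>\<epsilon>. 0 < \<epsilon> \<Longrightarrow> \<epsilon> < d \<Longrightarrow> x \<le> y + \<epsilon> * C"
  shows "x \<le> y"
proof (rule field_le_epsilon)
  fix e :: real assume e: "0 < e"
  define \<epsilon> where "\<epsilon> = min (d / 2) (e / (\<bar>C\<bar> + 1))"
  have \<epsilon>: "0 < \<epsilon>" "\<epsilon> < d" using d e by (auto simp: \<epsilon>_def)
  have "\<epsilon> * C \<le> \<epsilon> * \<bar>C\<bar>"
    using \<epsilon> by (intro mult_left_mono) auto
  also have "\<dots> \<le> e / (\<bar>C\<bar> + 1) * \<bar>C\<bar>"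
    by (intro mult_right_mono) (auto simp: \<epsilon>_def)
  also have "\<dots> \<le> e"
    using e by (simp add: field_simps)
  finally show "x \<le> y + e" using le[OF \<epsilon>] by linarith
qed

lemma norm_scaleR_le_of_unit_interval:
  assumes "0 \<le> s" "s \<le> 1"
  shows "norm (s *\<^sub>R v) \<le> norm v"
  using assms by (simp add: mult_left_le_one_le)

locale tules_nl_system =
  fixes F :: "'e::real_inner \<times> 'x::real_inner \<Rightarrow> 'e"
    and G :: "'e \<times> 'x \<Rightarrow> 'x"
    and DF :: "'e \<times> 'x \<Rightarrow> ('e \<times> 'x) \<Rightarrow>\<^sub>L 'e"
    and D2F :: "'e \<times> 'x \<Rightarrow> ('e \<times> 'x) \<Rightarrow>\<^sub>L (('e \<times> 'x) \<Rightarrow>\<^sub>L 'e)"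
    and DG :: "'e \<times> 'x \<Rightarrow> ('e \<times> 'x) \<Rightarrow>\<^sub>L 'x"
    and r k lam \<rho> \<mu> c :: real
  assumes F_D1: "\<And>p. (F has_derivative blinfun_apply (DF p)) (at p)"
    and F_D2: "\<And>p. (DF has_derivative blinfun_apply (D2F p)) (at p)"
    and G_D1: "\<And>p. (G has_derivative blinfun_apply (DG p)) (at p)"
    and fwd: "forward_complete (\<lambda>p. (F p, G p))"
    and r_pos: "r > 0" and k_pos: "k > 0" and lam_nonneg: "lam \<ge> 0"
    and TULES: "\<And>\<phi> t. solves_fwd \<phi> (\<lambda>p. (F p, G p)) \<Longrightarrow> norm (fst (\<phi> 0)) < r \<Longrightarrow> t \<ge> 0 \<Longrightarrow>
                  norm (fst (\<phi> t)) \<le> k * norm (fst (\<phi> 0)) * exp (- lam * t)"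
    and rho_nonneg: "\<rho> \<ge> 0" and mu_nonneg: "\<mu> \<ge> 0" and c_nonneg: "c \<ge> 0"
    and dFe0: "\<And>x v. norm (DF (0, x) (v, 0)) \<le> \<mu> * norm v"
    and dGx0: "\<And>x w. norm (DG (0, x) (0, w)) \<le> \<rho> * norm w"
    and d2Fee: "\<And>e x v w. norm e < k * r \<Longrightarrow>
                  norm (D2F (e, x) (v, 0) (w, 0)) \<le> c * norm v * norm w"
    and d2Fxe: "\<And>e x v w. norm e < k * r \<Longrightarrow>
                  norm (D2F (e, x) (0, w) (v, 0)) \<le> c * norm w * norm v"
    and dGe: "\<And>e x v. norm e < k * r \<Longrightarrow> norm (DG (e, x) (v, 0)) \<le> c * norm v"
begin

lemma fst_solution_eq_zero:
  assumes "solves_fwd \<phi> (\<lambda>p. (F p, G p))" "fst (\<phi> 0) = 0" "0 \<le> t"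
  shows "fst (\<phi> t) = 0"
  using TULES[OF assms(1) _ assms(3)] assms(2) r_pos by simp

lemma F_zero_fst: "F (0, x) = 0"
proof -
  obtain \<phi> where \<phi>0: "\<phi> 0 = (0, x)" and sol: "solves_fwd \<phi> (\<lambda>p. (F p, G p))"
    using fwd unfolding forward_complete_def by blast
  have "((\<lambda>t. fst (\<phi> t)) has_vector_derivative F (0, x)) (at 0 within {0..})"
    using solves_fwd_fst[OF sol, of 0] \<phi>0 by simp
  moreover have "((\<lambda>t. fst (\<phi> t)) has_vector_derivative 0) (at 0 within {0..})"
    by (rule has_vector_derivative_transform[where f = "\<lambda>_. 0"])
       (auto simp: fst_solution_eq_zero[OF sol] \<phi>0)
  ultimately show ?thesis
    by (rule vector_derivative_unique_within[rotated]) (simp add: at_within_Ici_at_right)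
qed

lemma forward_complete_reduced: "forward_complete (\<lambda>x. G (0, x))"
  unfolding forward_complete_def
proof
  fix x0
  obtain \<phi> where \<phi>0: "\<phi> 0 = (0, x0)" and sol: "solves_fwd \<phi> (\<lambda>p. (F p, G p))"
    using fwd unfolding forward_complete_def by blast
  have "solves_fwd (\<lambda>t. snd (\<phi> t)) (\<lambda>x. G (0, x))"
    unfolding solves_fwd_def
  proof (intro allI impI)
    fix t :: real assume t: "0 \<le> t"
    have "\<phi> t = (0, snd (\<phi> t))"
      using fst_solution_eq_zero[OF sol _ t] \<phi>0 by (simp add: prod_eq_iff)
    then have "G (\<phi> t) = G (0, snd (\<phi> t))"
      by (rule arg_cong)
    with solves_fwd_snd[OF sol t]
    show "((\<lambda>t. snd (\<phi> t)) has_vector_derivative G (0, snd (\<phi> t))) (at t within {0..})"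
      by simp
  qed
  with \<phi>0 show "\<exists>\<psi>. \<psi> 0 = x0 \<and> solves_fwd \<psi> (\<lambda>x. G (0, x))"
    by (intro exI[of _ "\<lambda>t. snd (\<phi> t)"]) simp
qed

lemma DF_apply_has_derivative: "((\<lambda>p. DF p w) has_derivative (\<lambda>h. D2F p h w)) (at p)"
  by (auto intro!: derivative_eq_intros F_D2)

lemma G_diff_fst:
  assumes "norm e < k * r"
  shows "norm (G (e, x) - G (0, x)) \<le> c * norm e"
proof (rule norm_diff_le_of_segment_derivative_bound[OF G_D1])
  fix s :: real assume "0 \<le> s" "s \<le> 1"
  then have "norm (s *\<^sub>R e) < k * r"
    using norm_scaleR_le_of_unit_interval[of s e] assms by linarith
  then show "norm (DG ((0, x) + s *\<^sub>R ((e, x) - (0, x))) ((e, x) - (0, x))) \<le> c * norm e"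
    using dGe by simp
qed

lemma G_lipschitz_snd: "norm (G (0, x) - G (0, x')) \<le> \<rho> * norm (x - x')"
  by (rule norm_diff_le_of_segment_derivative_bound[OF G_D1]) (simp add: dGx0)

lemma DF_diff_snd: "norm (DF (0, x) (v, 0) - DF (0, x') (v, 0)) \<le> c * norm (x - x') * norm v"
  by (rule norm_diff_le_of_segment_derivative_bound[OF DF_apply_has_derivative])
     (simp add: d2Fxe k_pos r_pos)

lemma DF_diff_fst:
  assumes "norm e < k * r"
  shows "norm (DF (e, x) (w, 0) - DF (0, x) (w, 0)) \<le> c * norm e * norm w"
proof (rule norm_diff_le_of_segment_derivative_bound[OF DF_apply_has_derivative])
  fix s :: real assume "0 \<le> s" "s \<le> 1"
  then have "norm (s *\<^sub>R e) < k * r"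
    using norm_scaleR_le_of_unit_interval[of s e] assms by linarith
  then show "norm (D2F ((0, x) + s *\<^sub>R ((e, x) - (0, x))) ((e, x) - (0, x)) (w, 0)) \<le> c * norm e * norm w"
    using d2Fee by simp
qed

lemma F_taylor_remainder:
  assumes e: "norm e < k * r"
  shows "norm (F (e, x) - F (0, x) - DF (0, x) (e, 0)) \<le> c * norm e * norm e"
proof -
  have "norm ((F (e, x) - DF (0, x) (e, x)) - (F (0, x) - DF (0, x) (0, x))) \<le> c * norm e * norm e"
  proof (rule norm_diff_le_of_segment_derivative_bound[where H = "\<lambda>p. F p - DF (0, x) p"])
    show "((\<lambda>p. F p - DF (0, x) p) has_derivative (\<lambda>h. DF p h - DF (0, x) h)) (at p)" for p
      by (intro has_derivative_diff F_D1 bounded_linear_imp_has_derivative blinfun.bounded_linear_right)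
    fix s :: real assume "0 \<le> s" "s \<le> 1"
    then have se: "norm (s *\<^sub>R e) \<le> norm e"
      by (rule norm_scaleR_le_of_unit_interval)
    then have "c * norm (s *\<^sub>R e) * norm e \<le> c * norm e * norm e"
      using c_nonneg by (intro mult_right_mono mult_left_mono) auto
    with DF_diff_fst[of "s *\<^sub>R e" x e] se e
    show "norm (DF ((0, x) + s *\<^sub>R ((e, x) - (0, x))) ((e, x) - (0, x)) - DF (0, x) ((e, x) - (0, x)))
        \<le> c * norm e * norm e"
      by simp
  qed
  moreover have "DF (0, x) (e, x) - DF (0, x) (0, x) = DF (0, x) (e, 0)"
    by (simp flip: blinfun.diff_right)
  ultimately show ?thesis
    by (simp add: algebra_simps)
qed

lemma snd_deviation:
  assumes lin: "solves_fwd \<psi> (\<lambda>(e, x). (DF (0, x) (e, 0), G (0, x)))"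
    and sol: "solves_fwd \<phi> (\<lambda>p. (F p, G p))"
    and snd0: "snd (\<phi> 0) = snd (\<psi> 0)"
    and small: "\<And>s. 0 \<le> s \<Longrightarrow> norm (fst (\<phi> s)) \<le> \<eta>" and \<eta>: "\<eta> < k * r"
    and t: "0 \<le> t"
  shows "norm (snd (\<phi> t) - snd (\<psi> t)) \<le> c * \<eta> * exp ((\<rho> + 1/2) * t)"
proof -
  have \<eta>0: "0 \<le> \<eta>"
    using small[of 0] norm_ge_zero[of "fst (\<phi> 0)"] by linarith
  have "norm (snd (\<phi> t) - snd (\<psi> t)) \<le> (norm (snd (\<phi> 0) - snd (\<psi> 0)) + c * \<eta>) * exp ((\<rho> + 1/2) * t)"
  proof (rule norm_le_exp_of_affine_derivative_bound[where T = t])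
    fix s assume s: "0 \<le> s" "s \<le> t"
    show "((\<lambda>s. snd (\<phi> s) - snd (\<psi> s)) has_vector_derivative G (\<phi> s) - G (0, snd (\<psi> s)))
        (at s within {0..})"
      using has_vector_derivative_diff[OF solves_fwd_snd[OF sol s(1)] solves_fwd_snd[OF lin s(1)]]
      by (simp add: case_prod_beta)
    have "norm (fst (\<phi> s)) < k * r"
      using small[OF s(1)] \<eta> by linarith
    then have Ge: "norm (G (\<phi> s) - G (0, snd (\<phi> s))) \<le> c * \<eta>"
      using G_diff_fst[of "fst (\<phi> s)" "snd (\<phi> s)"] small[OF s(1)] c_nonneg
      by (simp add: order_trans[OF _ mult_left_mono])
    have Gx: "norm (G (0, snd (\<phi> s)) - G (0, snd (\<psi> s))) \<le> \<rho> * norm (snd (\<phi> s) - snd (\<psi> s))"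
      by (rule G_lipschitz_snd)
    show "norm (G (\<phi> s) - G (0, snd (\<psi> s))) \<le> \<rho> * norm (snd (\<phi> s) - snd (\<psi> s)) + c * \<eta>"
      using norm_diff_triangle_le[OF Ge Gx] by linarith
  qed (use rho_nonneg c_nonneg \<eta>0 t in auto)
  then show ?thesis
    using snd0 by simp
qed

lemma linearization_deviation:
  assumes lin: "solves_fwd \<psi> (\<lambda>(e, x). (DF (0, x) (e, 0), G (0, x)))"
    and sol: "solves_fwd \<phi> (\<lambda>p. (F p, G p))"
    and init: "\<phi> 0 = (\<epsilon> *\<^sub>R fst (\<psi> 0), snd (\<psi> 0))"
    and small: "\<And>s. 0 \<le> s \<Longrightarrow> norm (fst (\<phi> s)) \<le> \<eta>" and \<eta>: "\<eta> < k * r"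
    and t: "0 \<le> t"
  shows "norm (fst (\<phi> t) - \<epsilon> *\<^sub>R fst (\<psi> t))
    \<le> c * \<eta> * (\<eta> + c * \<eta> * exp ((\<rho> + 1/2) * t)) * exp ((\<mu> + 1/2) * t)"
proof -
  define \<delta> where "\<delta> s = fst (\<phi> s) - \<epsilon> *\<^sub>R fst (\<psi> s)" for s
  define B where "B = c * \<eta> * (\<eta> + c * \<eta> * exp ((\<rho> + 1/2) * t))"
  have \<eta>0: "0 \<le> \<eta>"
    using small[of 0] norm_ge_zero[of "fst (\<phi> 0)"] by linarith
  have "norm (\<delta> t) \<le> (norm (\<delta> 0) + B) * exp ((\<mu> + 1/2) * t)"
  proof (rule norm_le_exp_of_affine_derivative_bound[where T = t])
    fix s assume s: "0 \<le> s" "s \<le> t"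
    define E X x where "E = fst (\<phi> s)" and "X = snd (\<phi> s)" and "x = snd (\<psi> s)"
    have \<phi>s: "\<phi> s = (E, X)"
      by (simp add: E_def X_def)
    have E: "norm E \<le> \<eta>" "norm E < k * r"
      using small[OF s(1)] \<eta> by (auto simp: E_def)
    show "(\<delta> has_vector_derivative F (E, X) - \<epsilon> *\<^sub>R DF (0, x) (fst (\<psi> s), 0)) (at s within {0..})"
      unfolding \<delta>_def
      using has_vector_derivative_diff[OF solves_fwd_fst[OF sol s(1)]
          bounded_linear.has_vector_derivative[OF bounded_linear_scaleR_right solves_fwd_fst[OF lin s(1)]]]
      by (simp add: \<phi>s x_def case_prod_beta)
    have \<delta>_pair: "(\<delta> s, 0) = (E, 0) - \<epsilon> *\<^sub>R (fst (\<psi> s), 0)"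
      by (simp add: \<delta>_def E_def)
    have lin_\<delta>: "DF (0, x) (\<delta> s, 0) = DF (0, x) (E, 0) - \<epsilon> *\<^sub>R DF (0, x) (fst (\<psi> s), 0)"
      unfolding \<delta>_pair by (simp only: blinfun.diff_right blinfun.scaleR_right)
    have decomp: "F (E, X) - \<epsilon> *\<^sub>R DF (0, x) (fst (\<psi> s), 0) =
        (F (E, X) - F (0, X) - DF (0, X) (E, 0)) + (DF (0, X) (E, 0) - DF (0, x) (E, 0))
        + DF (0, x) (\<delta> s, 0)"
      using lin_\<delta> F_zero_fst[of X] by (simp add: algebra_simps)
    have "c * norm E * norm E \<le> c * \<eta> * \<eta>"
      using E(1) c_nonneg \<eta>0 by (intro mult_mono mult_left_mono) auto
    with F_taylor_remainder[OF E(2), of X]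
    have taylor: "norm (F (E, X) - F (0, X) - DF (0, X) (E, 0)) \<le> c * \<eta> * \<eta>"
      by linarith
    have "norm (X - x) \<le> c * \<eta> * exp ((\<rho> + 1/2) * s)"
      using snd_deviation[OF lin sol _ small \<eta> s(1)] init by (simp add: X_def x_def)
    also have "\<dots> \<le> c * \<eta> * exp ((\<rho> + 1/2) * t)"
      using s rho_nonneg c_nonneg \<eta>0 by (intro mult_left_mono) auto
    finally have "c * norm (X - x) * norm E \<le> c * (c * \<eta> * exp ((\<rho> + 1/2) * t)) * \<eta>"
      using E(1) c_nonneg \<eta>0 by (intro mult_mono mult_left_mono) auto
    with DF_diff_snd[of X E x]
    have transversal: "norm (DF (0, X) (E, 0) - DF (0, x) (E, 0))
        \<le> c * (c * \<eta> * exp ((\<rho> + 1/2) * t)) * \<eta>"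
      by linarith
    have "norm (F (E, X) - \<epsilon> *\<^sub>R DF (0, x) (fst (\<psi> s), 0))
        \<le> c * \<eta> * \<eta> + c * (c * \<eta> * exp ((\<rho> + 1/2) * t)) * \<eta> + \<mu> * norm (\<delta> s)"
      unfolding decomp using taylor transversal dFe0 by (intro norm_triangle_le add_mono) auto
    then show "norm (F (E, X) - \<epsilon> *\<^sub>R DF (0, x) (fst (\<psi> s), 0)) \<le> \<mu> * norm (\<delta> s) + B"
      by (simp add: B_def algebra_simps)
  qed (use mu_nonneg c_nonneg \<eta>0 t in \<open>auto simp: B_def\<close>)
  then show ?thesis
    using init by (simp add: \<delta>_def B_def)
qed

lemma linearized_decay:
  assumes lin: "solves_fwd \<psi> (\<lambda>(e, x). (DF (0, x) (e, 0), G (0, x)))" and t: "0 \<le> t"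
  shows "norm (fst (\<psi> t)) \<le> k * exp (- lam * t) * norm (fst (\<psi> 0))"
proof -
  define a where "a = norm (fst (\<psi> 0))"
  define C where "C = c * (k * a) * (k * a + c * (k * a) * exp ((\<rho> + 1/2) * t)) * exp ((\<mu> + 1/2) * t)"
  have a0: "0 \<le> a"
    by (simp add: a_def)
  \<comment> \<open>\<open>r / (a + 1)\<close> rather than \<open>r / a\<close>, which would be \<open>0\<close> when \<open>a = 0\<close>.\<close>
  have approx: "norm (fst (\<psi> t)) \<le> k * exp (- lam * t) * a + \<epsilon> * C"
    if \<epsilon>: "0 < \<epsilon>" "\<epsilon> < r / (a + 1)" for \<epsilon>
  proof -
    have "\<epsilon> * a \<le> \<epsilon> * (a + 1)"
      using \<epsilon> by simp
    also have "\<dots> < r"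
      using \<epsilon> a0 by (simp add: field_simps)
    finally have \<epsilon>a: "\<epsilon> * a < r" .
    obtain \<phi> where init: "\<phi> 0 = (\<epsilon> *\<^sub>R fst (\<psi> 0), snd (\<psi> 0))" and sol: "solves_fwd \<phi> (\<lambda>p. (F p, G p))"
      using fwd unfolding forward_complete_def by blast
    have decay: "norm (fst (\<phi> s)) \<le> \<epsilon> * (k * a * exp (- lam * s))" if "0 \<le> s" for s
      using TULES[OF sol _ that] init \<epsilon> \<epsilon>a by (simp add: a_def mult_ac)
    have small: "norm (fst (\<phi> s)) \<le> \<epsilon> * (k * a)" if "0 \<le> s" for s
    proof -
      have "k * a * exp (- lam * s) \<le> k * a"
        using k_pos a0 lam_nonneg that by (intro mult_left_le) (auto simp: mult_nonneg_nonneg)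
      with decay[OF that] \<epsilon> show ?thesis
        by (meson mult_left_mono less_imp_le order_trans)
    qed
    have "\<epsilon> * (k * a) < k * r"
      using \<epsilon>a k_pos by (simp add: mult.left_commute)
    from linearization_deviation[OF lin sol init small this t]
    have "norm (fst (\<phi> t) - \<epsilon> *\<^sub>R fst (\<psi> t)) \<le> \<epsilon> * (\<epsilon> * C)"
      by (simp add: C_def algebra_simps)
    then have "\<epsilon> * norm (fst (\<psi> t)) \<le> norm (fst (\<phi> t)) + \<epsilon> * (\<epsilon> * C)"
      using norm_triangle_ineq2[of "\<epsilon> *\<^sub>R fst (\<psi> t)" "fst (\<phi> t)"] \<epsilon>
      by (simp add: norm_minus_commute)
    also have "\<dots> \<le> \<epsilon> * (k * exp (- lam * t) * a + \<epsilon> * C)"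
      using decay[OF t] by (simp add: algebra_simps)
    finally show ?thesis
      using \<epsilon> by simp
  qed
  have "0 < r / (a + 1)"
    using r_pos a0 by (auto intro: divide_pos_pos)
  from le_of_le_add_eps_multiple[OF this approx] show ?thesis
    by (simp add: a_def)
qed

end

theorem proposition1:
  fixes F :: "'e::euclidean_space \<times> 'x::euclidean_space \<Rightarrow> 'e"
    and G :: "'e \<times> 'x \<Rightarrow> 'x"
    and DF :: "'e \<times> 'x \<Rightarrow> ('e \<times> 'x) \<Rightarrow>\<^sub>L 'e"
    and D2F :: "'e \<times> 'x \<Rightarrow> ('e \<times> 'x) \<Rightarrow>\<^sub>L (('e \<times> 'x) \<Rightarrow>\<^sub>L 'e)"
    and DG :: "'e \<times> 'x \<Rightarrow> ('e \<times> 'x) \<Rightarrow>\<^sub>L 'x"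
    and D2G :: "'e \<times> 'x \<Rightarrow> ('e \<times> 'x) \<Rightarrow>\<^sub>L (('e \<times> 'x) \<Rightarrow>\<^sub>L 'x)"
    and r k lam \<rho> \<mu> c :: real
  assumes F_D1: "\<And>p. (F has_derivative blinfun_apply (DF p)) (at p)"
    and F_D2: "\<And>p. (DF has_derivative blinfun_apply (D2F p)) (at p)"
    and F_C2: "continuous_on UNIV D2F"
    and G_D1: "\<And>p. (G has_derivative blinfun_apply (DG p)) (at p)"
    and G_D2: "\<And>p. (DG has_derivative blinfun_apply (D2G p)) (at p)"
    and G_C2: "continuous_on UNIV D2G"
    and fwd: "forward_complete (\<lambda>p. (F p, G p))"
    and r_pos: "r > 0" and k_pos: "k > 0" and lam_pos: "lam > 0"
    and TULES: "\<And>\<phi> t. solves_fwd \<phi> (\<lambda>p. (F p, G p)) \<Longrightarrow> norm (fst (\<phi> 0)) < r \<Longrightarrow> t \<ge> 0 \<Longrightarrow>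
                  norm (fst (\<phi> t)) \<le> k * norm (fst (\<phi> 0)) * exp (- lam * t)"
    and rho_pos: "\<rho> > 0" and mu_pos: "\<mu> > 0" and c_pos: "c > 0"
    and dFe0: "\<And>x v. norm (DF (0, x) (v, 0)) \<le> \<mu> * norm v"
    and dGx0: "\<And>x w. norm (DG (0, x) (0, w)) \<le> \<rho> * norm w"
    and d2Fee: "\<And>e x v w. norm e < k * r \<Longrightarrow>
                  norm (D2F (e, x) (v, 0) (w, 0)) \<le> c * norm v * norm w"
    and d2Fxe: "\<And>e x v w. norm e < k * r \<Longrightarrow>
                  norm (D2F (e, x) (0, w) (v, 0)) \<le> c * norm w * norm v"
    and dGe: "\<And>e x v. norm e < k * r \<Longrightarrow> norm (DG (e, x) (v, 0)) \<le> c * norm v"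
  shows "forward_complete (\<lambda>x. G (0, x)) \<and>
         (\<exists>k' lam'. k' > 0 \<and> lam' > 0 \<and>
            (\<forall>\<psi> t. solves_fwd \<psi> (\<lambda>(e, x). (DF (0, x) (e, 0), G (0, x))) \<and> t \<ge> 0 \<longrightarrow>
                norm (fst (\<psi> t)) \<le> k' * exp (- lam' * t) * norm (fst (\<psi> 0))))"
proof -
  interpret tules_nl_system F G DF D2F DG r k lam \<rho> \<mu> c
    using assms by unfold_locales auto
  show ?thesis
    using forward_complete_reduced linearized_decay k_pos lam_pos by blast
qed

end
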